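(* Let $k$ be a fixed non-negative integer. There is an algorithm which, given an arbitrary $n\times n$ matrix $M$ with entries in $\mathbb{Z}_2$, decides whether $R(M)\le k$, and whose running time is $O(n^{k+4})$ (the implied constant may depend on $k$).
   Context: For an $n\times n$ matrix $M$ with entries in $\mathbb{Z}_2$, $R(M)$ denotes the minimal rank (over $\mathbb{Z}_2$) among all matrices obtained from $M$ by changing some (possibly none) of the entries on the main diagonal of $M$, i.e. $R(M)=\min\{\operatorname{rk}(M+D): D \text{ an } n\times n \text{ diagonal matrix over } \mathbb{Z}_2\}$. Complexity is measured in elementary operations on entries of $\mathbb{Z}_2$. *)

theory Defs
  imports "HOL-Library.Z2" "Jordan_Normal_Form.DL_Rank"
begin

definition diag_mat_n :: "nat \<Rightarrow> bit mat \<Rightarrow> bool" where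
  "diag_mat_n n D \<longleftrightarrow> D \<in> carrier_mat n n \<and>
     (\<forall>i<n. \<forall>j<n. i \<noteq> j \<longrightarrow> D $$ (i, j) = 0)"

definition minrank :: "bit mat \<Rightarrow> nat" where
  "minrank M = Min {vec_space.rank (dim_row M) (M + D) | D. diag_mat_n (dim_row M) D}"

text \<open>State: natural-number registers (indices/counters) and a collection of
  two-dimensional bit arrays (memory cell (a,i,j) = entry (i,j) of array a).\<close>

type_synonym state = "(nat \<Rightarrow> nat) \<times> (nat \<Rightarrow> nat \<Rightarrow> nat \<Rightarrow> bool)"

datatype aexp = N nat | V nat | Plus aexp aexp | Minus aexp aexp

datatype bexp = Bc bool | Less aexp aexp | Eq aexp aexp | Not bexp
  | And bexp bexp | Xor bexp bexp | Cell aexp aexp aexp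

datatype com = SKIP | Assign nat aexp | Store aexp aexp aexp bexp
  | Seq com com | If bexp com com | While bexp com

fun aval :: "aexp \<Rightarrow> state \<Rightarrow> nat" where
  "aval (N c) s = c"
| "aval (V x) s = fst s x"
| "aval (Plus a b) s = aval a s + aval b s"
| "aval (Minus a b) s = aval a s - aval b s"

fun bval :: "bexp \<Rightarrow> state \<Rightarrow> bool" where
  "bval (Bc v) s = v"
| "bval (Less a b) s = (aval a s < aval b s)"
| "bval (Eq a b) s = (aval a s = aval b s)"
| "bval (Not b) s = (\<not> bval b s)"
| "bval (And b c) s = (bval b s \<and> bval c s)"
| "bval (Xor b c) s = (bval b s \<noteq> bval c s)"
| "bval (Cell a i j) s = snd s (aval a s) (aval i s) (aval j s)"

inductive big_step :: "com \<Rightarrow> state \<Rightarrow> nat \<Rightarrow> state \<Rightarrow> bool" where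
  Skip: "big_step SKIP s 1 s"
| Assign: "big_step (Assign x a) s 1 ((fst s)(x := aval a s), snd s)"
| Store: "big_step (Store a i j b) s 1
     (fst s, (snd s)(aval a s := (snd s (aval a s))(aval i s := (snd s (aval a s) (aval i s))(aval j s := bval b s))))"
| Seq: "big_step c1 s1 t1 s2 \<Longrightarrow> big_step c2 s2 t2 s3 \<Longrightarrow> big_step (Seq c1 c2) s1 (t1 + t2) s3"
| IfTrue: "bval b s \<Longrightarrow> big_step c1 s t s' \<Longrightarrow> big_step (If b c1 c2) s (t + 1) s'"
| IfFalse: "\<not> bval b s \<Longrightarrow> big_step c2 s t s' \<Longrightarrow> big_step (If b c1 c2) s (t + 1) s'"
| WhileFalse: "\<not> bval b s \<Longrightarrow> big_step (While b c) s 1 s"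
| WhileTrue: "bval b s1 \<Longrightarrow> big_step c s1 t1 s2 \<Longrightarrow> big_step (While b c) s2 t2 s3 \<Longrightarrow>
     big_step (While b c) s1 (1 + t1 + t2) s3"

text \<open>Input encoding: register 0 holds n, array 0 holds the matrix (True = 1),
  everything else is zero/False.  Output: register 1 nonzero means "yes".\<close>

definition init_state :: "nat \<Rightarrow> bit mat \<Rightarrow> state" where
  "init_state n M = ((\<lambda>x. if x = 0 then n else 0),
     (\<lambda>a i j. a = 0 \<and> i < n \<and> j < n \<and> M $$ (i, j) = 1))"

definition accepts :: "state \<Rightarrow> bool" where
  "accepts s \<longleftrightarrow> fst s 1 \<noteq> 0"

end

(*
  R(M) <= k iff there are k columns of M, each with its diagonal entry replaced by an arbitrary
  bit (or the zero column), such that every column j of M agrees off the diagonal with a linear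
  combination of them: choosing the diagonal entry of column j to match the combination puts all
  columns of the modified matrix into their span, and conversely a column basis of an optimal
  M + D is such a family. The condition is a quantifier prefix "exists columns and bits, for all j,
  exists coefficients, for all l" over ranges of sizes (2(n+1))^k, n, 2^k and n, followed by an XOR
  of k bits; nested counting loops therefore decide it in O(n^(k+2)) steps.
*)

theory Submission
  imports Defs
begin

section \<open>Column spans and the minimal rank\<close>

lemma (in vec_space) obtain_maximal_indpt_cols:
  assumes "A \<in> carrier_mat n nc"
  obtains S where "S \<subseteq> set (cols A)" "finite S" "lin_indpt S" "card S = rank A"
    "maximal S (\<lambda>T. T \<subseteq> set (cols A) \<and> lin_indpt T)"
proof -
  have "lin_indpt {}"
    unfolding lin_dep_def by auto
  then obtain S where "finite S" and max: "maximal S (\<lambda>T. T \<subseteq> set (cols A) \<and> lin_indpt T)"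
    using maximal_exists_superset[of "set (cols A)" "\<lambda>T. T \<subseteq> set (cols A) \<and> lin_indpt T" "{}"]
    by auto
  with rank_card_indpt[OF assms max] show thesis
    using that unfolding maximal_def by auto
qed

lemma (in vec_space) rank_le_card_spanning:
  assumes A: "A \<in> carrier_mat n nc" and W: "finite W" "W \<subseteq> carrier_vec n"
    and span: "set (cols A) \<subseteq> span W"
  shows "rank A \<le> card W"
proof -
  obtain S where "S \<subseteq> set (cols A)" "finite S" "lin_indpt S" "card S = rank A"
    using obtain_maximal_indpt_cols[OF A] .
  moreover from this have "S \<subseteq> span W"
    using span by blast
  ultimately show ?thesis
    using replacement[OF \<open>finite S\<close> W] by fastforce
qed

lemma (in vec_space) cols_in_span_of_basis:
  assumes A: "A \<in> carrier_mat n nc"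
  obtains S where "S \<subseteq> set (cols A)" "card S = rank A" "set (cols A) \<subseteq> span S"
proof -
  obtain S where S: "S \<subseteq> set (cols A)" "finite S" "lin_indpt S" "card S = rank A"
    and max: "maximal S (\<lambda>T. T \<subseteq> set (cols A) \<and> lin_indpt T)"
    using obtain_maximal_indpt_cols[OF A] .
  have cols: "set (cols A) \<subseteq> carrier_vec n"
    using A cols_dim by blast
  have "c \<in> span S" if c: "c \<in> set (cols A)" for c
  proof (rule ccontr)
    assume c_out: "c \<notin> span S"
    have S_vec: "S \<subseteq> carrier_vec n"
      using S(1) cols by blast
    then have "c \<notin> S"
      using c_out in_own_span by blast
    then have "lin_indpt (S \<union> {c})"
      using lin_dep_iff_in_span[OF S_vec S(3) _ \<open>c \<notin> S\<close>] c cols c_out by auto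
    with max c S(1) \<open>c \<notin> S\<close> show False
      unfolding maximal_def by blast
  qed
  then show thesis
    using that S by blast
qed

text \<open>An index \<open>x \<ge> n\<close> stands for the zero column.\<close>

definition patched_col :: "bit mat \<Rightarrow> nat \<Rightarrow> nat \<Rightarrow> bit \<Rightarrow> nat \<Rightarrow> bit" where
  "patched_col M n x g l = (if l = x then g else if x < n then M $$ (l, x) else 0)"

definition off_diag_comb ::
    "bit mat \<Rightarrow> nat \<Rightarrow> nat \<Rightarrow> (nat \<Rightarrow> nat) \<Rightarrow> (nat \<Rightarrow> bit) \<Rightarrow> (nat \<Rightarrow> bit) \<Rightarrow> nat \<Rightarrow> bool" where
  "off_diag_comb M n k X G C j \<longleftrightarrow>
     (\<forall>l<n. l \<noteq> j \<longrightarrow> (\<Sum>i<k. C i * patched_col M n (X i) (G i) l) = M $$ (l, j))"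

definition off_diag_spanned :: "bit mat \<Rightarrow> nat \<Rightarrow> nat \<Rightarrow> (nat \<Rightarrow> nat) \<Rightarrow> (nat \<Rightarrow> bit) \<Rightarrow> bool" where
  "off_diag_spanned M n k X G \<longleftrightarrow> (\<forall>j<n. \<exists>C. off_diag_comb M n k X G C j)"

lemma bit_cases_0_1: "(b :: bit) = 0 \<or> b = 1"
  using bit_not_zero_iff by blast

lemma bit_add_cancel: "(a :: bit) + (b + a) = b"
  using bit_cases_0_1[of a] bit_cases_0_1[of b] by auto

lemma finite_diag_ranks:
  assumes "M \<in> carrier_mat n n"
  shows "finite {vec_space.rank n (M + D) | D. diag_mat_n n D}"
proof -
  have "vec_space.rank n (M + D) \<le> n" if "diag_mat_n n D" for D
  proof (rule vec_space.rank_le_nc)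
    show "M + D \<in> carrier_mat n n"
      using assms that unfolding diag_mat_n_def by auto
  qed
  then have "{vec_space.rank n (M + D) | D. diag_mat_n n D} \<subseteq> {..n}"
    by blast
  then show ?thesis
    using finite_subset by blast
qed

lemma minrank_eq_Min:
  assumes "M \<in> carrier_mat n n"
  shows "minrank M = Min {vec_space.rank n (M + D) | D. diag_mat_n n D}"
  unfolding minrank_def carrier_matD(1)[OF assms] by (rule refl)

lemma minrank_le_rank:
  assumes "M \<in> carrier_mat n n" "diag_mat_n n D"
  shows "minrank M \<le> vec_space.rank n (M + D)"
  unfolding minrank_eq_Min[OF assms(1)]
  by (rule Min_le[OF finite_diag_ranks[OF assms(1)]]) (use assms(2) in blast)

lemma minrank_attained:
  assumes "M \<in> carrier_mat n n"
  obtains D where "diag_mat_n n D" "vec_space.rank n (M + D) = minrank M"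
proof -
  have "diag_mat_n n (0\<^sub>m n n)"
    unfolding diag_mat_n_def by simp
  then have "{vec_space.rank n (M + D) | D. diag_mat_n n D} \<noteq> {}"
    by blast
  from Min_in[OF finite_diag_ranks[OF assms] this]
  have "minrank M \<in> {vec_space.rank n (M + D) | D. diag_mat_n n D}"
    unfolding minrank_eq_Min[OF assms] .
  then show thesis
    using that by auto
qed

lemma (in vec_space) in_span_image:
  assumes I: "finite I" and f: "f ` I \<subseteq> carrier_vec n" and v: "v \<in> carrier_vec n"
    and coords: "\<And>l. l < n \<Longrightarrow> v $ l = (\<Sum>i\<in>I. c i * f i $ l)"
  shows "v \<in> span (f ` I)"
proof (rule in_spanI)
  define a where "a w = (\<Sum>i\<in>{i\<in>I. f i = w}. c i)" for w
  have dim: "dim_vec (lincomb a (f ` I)) = n"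
    using lincomb_dim[OF finite_imageI[OF I] f] .
  show "v = lincomb a (f ` I)"
  proof (rule eq_vecI)
    fix l assume "l < dim_vec (lincomb a (f ` I))"
    then have l: "l < n"
      using dim by simp
    have "lincomb a (f ` I) $ l = (\<Sum>w\<in>f ` I. a w * w $ l)"
      by (rule lincomb_index[OF l f])
    also have "\<dots> = (\<Sum>w\<in>f ` I. \<Sum>i\<in>{i\<in>I. f i = w}. c i * f i $ l)"
    proof (rule sum.cong[OF refl])
      fix w
      have "a w * w $ l = (\<Sum>i\<in>{i\<in>I. f i = w}. c i * w $ l)"
        unfolding a_def by (rule sum_distrib_right)
      also have "\<dots> = (\<Sum>i\<in>{i\<in>I. f i = w}. c i * f i $ l)"
        by (rule sum.cong[OF refl]) (simp only: mem_Collect_eq)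
      finally show "a w * w $ l = (\<Sum>i\<in>{i\<in>I. f i = w}. c i * f i $ l)" .
    qed
    also have "\<dots> = (\<Sum>i\<in>I. c i * f i $ l)"
      by (rule sum.group[OF I finite_imageI[OF I]]) blast
    finally show "v $ l = lincomb a (f ` I) $ l"
      using coords[OF l] by simp
  qed (use v dim in simp)
qed (use I in simp_all)

lemma minrank_le_if_off_diag_spanned:
  assumes M: "M \<in> carrier_mat n n" and "off_diag_spanned M n k X G"
  shows "minrank M \<le> k"
proof -
  interpret V: vec_space "TYPE(bit)" n .
  have "\<forall>j. \<exists>C. j < n \<longrightarrow> (\<forall>l<n. l \<noteq> j \<longrightarrow>
      (\<Sum>i<k. C i * patched_col M n (X i) (G i) l) = M $$ (l, j))"
    using assms(2) unfolding off_diag_spanned_def off_diag_comb_def by blast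
  from choice[OF this] obtain C where "\<forall>j. j < n \<longrightarrow> (\<forall>l<n. l \<noteq> j \<longrightarrow>
      (\<Sum>i<k. C j i * patched_col M n (X i) (G i) l) = M $$ (l, j))"
    by blast
  then have C: "(\<Sum>i<k. C j i * patched_col M n (X i) (G i) l) = M $$ (l, j)"
    if "j < n" "l < n" "l \<noteq> j" for j l
    using that by blast
  define w where "w i = vec n (patched_col M n (X i) (G i))" for i
  define D where "D = mat n n (\<lambda>(l, j). if l = j then
      (\<Sum>i<k. C j i * patched_col M n (X i) (G i) j) + M $$ (j, j) else 0)"
  have D: "diag_mat_n n D"
    unfolding diag_mat_n_def D_def by auto
  have A: "M + D \<in> carrier_mat n n"
    using M unfolding D_def by auto
  have entry: "col (M + D) j $ l = (\<Sum>i<k. C j i * w i $ l)" if j: "j < n" and l: "l < n" for j l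
  proof (cases "l = j")
    case True
    have "col (M + D) j $ l
        = M $$ (j, j) + ((\<Sum>i<k. C j i * patched_col M n (X i) (G i) j) + M $$ (j, j))"
      using M j True unfolding D_def by (simp del: add_bit_eq_xor mult_bit_eq_and)
    then show ?thesis
      using True l unfolding w_def bit_add_cancel by (simp del: add_bit_eq_xor mult_bit_eq_and)
  next
    case False
    have "col (M + D) j $ l = M $$ (l, j)"
      using M j l False unfolding D_def by (simp del: add_bit_eq_xor mult_bit_eq_and)
    then show ?thesis
      using C[OF j l False] l unfolding w_def by (simp del: add_bit_eq_xor mult_bit_eq_and)
  qed
  have "col (M + D) j \<in> V.span (w ` {..<k})" if j: "j < n" for j
    by (rule V.in_span_image[where c = "C j"]) (use w_def j A entry in auto)
  then have "set (cols (M + D)) \<subseteq> V.span (w ` {..<k})"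
    using A by (auto simp: cols_def)
  then have "V.rank (M + D) \<le> card (w ` {..<k})"
    by (intro V.rank_le_card_spanning[OF A]) (auto simp: w_def)
  also have "\<dots> \<le> k"
    using card_image_le[of "{..<k}" w] by simp
  finally show ?thesis
    using minrank_le_rank[OF M D] by linarith
qed

lemma patched_cols_of_list:
  assumes A: "A \<in> carrier_mat n n" and ss: "set ss \<subseteq> set (cols A)" "length ss \<le> k"
    and off_diag: "\<And>l x. l < n \<Longrightarrow> x < n \<Longrightarrow> l \<noteq> x \<Longrightarrow> A $$ (l, x) = M $$ (l, x)"
  obtains X G where "\<forall>i<k. X i \<le> n"
    "\<forall>i. \<forall>l<n. patched_col M n (X i) (G i) l = (if i < length ss then ss ! i $ l else 0)"
proof -
  have "\<exists>x. i < length ss \<longrightarrow> x < n \<and> ss ! i = col A x" for i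
  proof (cases "i < length ss")
    case True
    then have "ss ! i \<in> set (cols A)"
      using ss(1) nth_mem by blast
    then show ?thesis
      using A by (auto simp: cols_def)
  qed simp
  then have "\<forall>i. \<exists>x. i < length ss \<longrightarrow> x < n \<and> ss ! i = col A x"
    by blast
  from choice[OF this] obtain Y where "\<forall>i. i < length ss \<longrightarrow> Y i < n \<and> ss ! i = col A (Y i)"
    by blast
  then have Y: "Y i < n" "ss ! i = col A (Y i)" if "i < length ss" for i
    using that by blast+
  define X where "X i = (if i < length ss then Y i else n)" for i
  define G where "G i = (if i < length ss then A $$ (Y i, Y i) else 0)" for i
  have "patched_col M n (X i) (G i) l = (if i < length ss then ss ! i $ l else 0)" if "l < n" for i l
    using Y[of i] off_diag[OF that, of "Y i"] A that unfolding patched_col_def X_def G_def by auto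
  moreover have "\<forall>i<k. X i \<le> n"
    using Y unfolding X_def by (simp add: less_imp_le)
  ultimately show thesis
    using that by blast
qed

lemma off_diag_spanned_if_cols_spanned:
  assumes A: "A \<in> carrier_mat n n"
    and off_diag: "\<And>l x. l < n \<Longrightarrow> x < n \<Longrightarrow> l \<noteq> x \<Longrightarrow> A $$ (l, x) = M $$ (l, x)"
    and S: "S \<subseteq> set (cols A)" "card S \<le> k" "set (cols A) \<subseteq> LinearCombinations.module.span class_ring (module_vec TYPE(bit) n) S"
  obtains X G where "\<forall>i<k. X i \<le> n" "off_diag_spanned M n k X G"
proof -
  interpret V: vec_space "TYPE(bit)" n .
  have S_fin: "finite S"
    using S(1) by (rule finite_subset) simp
  have S_vec: "S \<subseteq> carrier_vec n"
    using S(1) cols_dim[of A] A by auto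
  obtain ss where ss: "set ss = S" "distinct ss"
    using finite_distinct_list[OF S_fin] by blast
  have ss_cols: "set ss \<subseteq> set (cols A)" and len: "length ss \<le> k"
    using ss S(1,2) distinct_card[OF ss(2)] by simp_all
  obtain X G where X: "\<forall>i<k. X i \<le> n" and patched:
    "\<forall>i. \<forall>l<n. patched_col M n (X i) (G i) l = (if i < length ss then ss ! i $ l else 0)"
    by (rule patched_cols_of_list[OF A ss_cols len off_diag])
  have "off_diag_spanned M n k X G"
    unfolding off_diag_spanned_def off_diag_comb_def
  proof (intro allI impI)
    fix j assume j: "j < n"
    have "col A j \<in> set (cols A)"
      using j A by (simp add: cols_def)
    then have "col A j \<in> V.span S"
      by (rule subsetD[OF S(3)])
    then obtain a where a: "V.lincomb a S = col A j"
      using V.finite_in_span[OF S_fin S_vec] by auto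
    define C where "C i = (if i < length ss then a (ss ! i) else 0)" for i
    show "\<exists>C. \<forall>l<n. l \<noteq> j \<longrightarrow> (\<Sum>i<k. C i * patched_col M n (X i) (G i) l) = M $$ (l, j)"
    proof (intro exI allI impI)
      fix l assume l: "l < n" and lj: "l \<noteq> j"
      have "(\<Sum>i<k. C i * patched_col M n (X i) (G i) l) = (\<Sum>i<length ss. a (ss ! i) * ss ! i $ l)"
        by (rule sum.mono_neutral_cong_right)
          (use len patched l in \<open>auto simp: C_def\<close>)
      also have "\<dots> = (\<Sum>s\<in>S. a s * s $ l)"
        using sum.distinct_set_conv_list[OF ss(2), of "\<lambda>s. a s * s $ l"] ss(1)
        by (simp add: sum_list_sum_nth atLeast0LessThan)
      also have "\<dots> = col A j $ l"
        unfolding a[symmetric] by (rule V.lincomb_index[OF l S_vec, symmetric])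
      finally show "(\<Sum>i<k. C i * patched_col M n (X i) (G i) l) = M $$ (l, j)"
        using off_diag[OF l j lj] l j A by simp
    qed
  qed
  with X show thesis
    using that by blast
qed

lemma off_diag_spanned_if_minrank_le:
  assumes M: "M \<in> carrier_mat n n" and "minrank M \<le> k"
  obtains X G where "\<forall>i<k. X i \<le> n" "off_diag_spanned M n k X G"
proof -
  obtain D where D: "diag_mat_n n D" "vec_space.rank n (M + D) = minrank M"
    using minrank_attained[OF M] .
  have A: "M + D \<in> carrier_mat n n"
    using M D unfolding diag_mat_n_def by auto
  obtain S where S: "S \<subseteq> set (cols (M + D))" "card S = vec_space.rank n (M + D)"
    "set (cols (M + D)) \<subseteq> LinearCombinations.module.span class_ring (module_vec TYPE(bit) n) S"
    using vec_space.cols_in_span_of_basis[OF A] .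
  have off_diag: "(M + D) $$ (l, x) = M $$ (l, x)" if "l < n" "x < n" "l \<noteq> x" for l x
    using M D that unfolding diag_mat_n_def by auto
  have "card S \<le> k"
    using S(2) D(2) assms(2) by simp
  from off_diag_spanned_if_cols_spanned[OF A off_diag S(1) this S(3)] show thesis
    using that by blast
qed

lemma minrank_le_iff_off_diag_spanned:
  assumes "M \<in> carrier_mat n n"
  shows "minrank M \<le> k \<longleftrightarrow> (\<exists>X G. (\<forall>i<k. X i \<le> n) \<and> off_diag_spanned M n k X G)"
proof
  assume "minrank M \<le> k"
  obtain X G where "\<forall>i<k. X i \<le> n" "off_diag_spanned M n k X G"
    by (rule off_diag_spanned_if_minrank_le[OF assms \<open>minrank M \<le> k\<close>])
  then show "\<exists>X G. (\<forall>i<k. X i \<le> n) \<and> off_diag_spanned M n k X G"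
    by blast
qed (use minrank_le_if_off_diag_spanned[OF assms] in blast)

section \<open>Counting loops\<close>

lemma big_step_AssignI:
  "s' = ((fst s)(x := aval a s), snd s) \<Longrightarrow> t = 1 \<Longrightarrow> big_step (Assign x a) s t s'"
  using Assign by simp

lemma big_step_SkipI: "s' = s \<Longrightarrow> t = 1 \<Longrightarrow> big_step SKIP s t s'"
  using Skip by simp

lemma big_step_IfI:
  "big_step (if bval b s then c1 else c2) s t s' \<Longrightarrow> t' = t + 1 \<Longrightarrow> big_step (If b c1 c2) s t' s'"
  using IfTrue IfFalse by (cases "bval b s") simp_all

lemma big_step_While_count:
  assumes step: "\<And>i s. i < B \<Longrightarrow> I i s \<Longrightarrow>
      bval b s \<and> (\<exists>t s'. big_step c s t s' \<and> t \<le> T \<and> I (Suc i) s')"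
    and stop: "\<And>s. I B s \<Longrightarrow> \<not> bval b s"
  shows "I i s \<Longrightarrow> i \<le> B \<Longrightarrow>
    \<exists>t s'. big_step (While b c) s t s' \<and> t \<le> 1 + (B - i) * (T + 1) \<and> I B s'"
proof (induction "B - i" arbitrary: i s)
  case 0
  then have "I B s"
    by simp
  then show ?case
    using WhileFalse[OF stop] by fastforce
next
  case (Suc m)
  then have "i < B"
    by simp
  with step Suc.prems obtain t s' where t: "bval b s" "big_step c s t s'" "t \<le> T" "I (Suc i) s'"
    by blast
  moreover have "m = B - Suc i" "Suc i \<le> B"
    using Suc.hyps(2) \<open>i < B\<close> by simp_all
  then obtain t' s'' where "big_step (While b c) s' t' s''" "t' \<le> 1 + (B - Suc i) * (T + 1)" "I B s''"
    using Suc.hyps(1) t(4) by blast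
  moreover have "1 + t + t' \<le> 1 + (B - i) * (T + 1)"
    using \<open>t \<le> T\<close> \<open>t' \<le> _\<close> unfolding Suc.hyps(2)[symmetric] \<open>m = B - Suc i\<close>[symmetric]
    by simp
  ultimately show ?case
    using WhileTrue by blast
qed

definition set_reg :: "state \<Rightarrow> nat \<Rightarrow> nat \<Rightarrow> state" where
  "set_reg s x v = ((fst s)(x := v), snd s)"

definition set_regs :: "state \<Rightarrow> nat set \<Rightarrow> (nat \<Rightarrow> nat) \<Rightarrow> state" where
  "set_regs s R f = ((\<lambda>y. if y \<in> R then f y else fst s y), snd s)"

lemma fst_set_reg: "fst (set_reg s x v) y = (if y = x then v else fst s y)"
  and snd_set_reg: "snd (set_reg s x v) = snd s"
  and fst_set_regs: "fst (set_regs s R f) y = (if y \<in> R then f y else fst s y)"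
  and snd_set_regs: "snd (set_regs s R f) = snd s"
  unfolding set_reg_def set_regs_def by simp_all

definition ignores_regs :: "(state \<Rightarrow> bool) \<Rightarrow> nat set \<Rightarrow> bool" where
  "ignores_regs P R \<longleftrightarrow>
     (\<forall>s s'. snd s = snd s' \<longrightarrow> (\<forall>y. y \<notin> R \<longrightarrow> fst s y = fst s' y) \<longrightarrow> P s = P s')"

lemma ignores_regsD:
  "ignores_regs P R \<Longrightarrow> snd s = snd s' \<Longrightarrow> (\<And>y. y \<notin> R \<Longrightarrow> fst s y = fst s' y) \<Longrightarrow> P s = P s'"
  unfolding ignores_regs_def by blast

lemma ignores_regs_mono: "ignores_regs P R \<Longrightarrow> R' \<subseteq> R \<Longrightarrow> ignores_regs P R'"
  unfolding ignores_regs_def by blast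

definition computes :: "nat \<Rightarrow> com \<Rightarrow> nat set \<Rightarrow> nat \<Rightarrow> (state \<Rightarrow> bool) \<Rightarrow> nat \<Rightarrow> bool" where
  "computes n c R r P T \<longleftrightarrow> (\<forall>s. fst s 0 = n \<longrightarrow> (\<exists>t s'. big_step c s t s' \<and> t \<le> T \<and>
     snd s' = snd s \<and> (\<forall>y. y \<notin> R \<longrightarrow> fst s' y = fst s y) \<and> (fst s' r \<noteq> 0 \<longleftrightarrow> P s)))"

definition test_cmd :: "bexp \<Rightarrow> nat \<Rightarrow> com" where
  "test_cmd b r = If b (Assign r (N 1)) (Assign r (N 0))"

lemma big_step_test_cmd: "big_step (test_cmd b r) s 2 ((fst s)(r := of_bool (bval b s)), snd s)"
  unfolding test_cmd_def by (auto intro!: big_step_IfI big_step_AssignI)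

lemma computes_test_cmd: "computes n (test_cmd b r) {r} r (bval b) 2"
  unfolding computes_def using big_step_test_cmd by fastforce

definition quant :: "bool \<Rightarrow> nat \<Rightarrow> (nat \<Rightarrow> bool) \<Rightarrow> bool" where
  "quant ex B f = (if ex then \<exists>v<B. f v else \<forall>v<B. f v)"

lemma quant_0: "quant ex 0 f = (\<not> ex)"
  unfolding quant_def by simp

lemma quant_Suc: "quant ex (Suc i) f = (if ex then quant ex i f \<or> f i else quant ex i f \<and> f i)"
  unfolding quant_def by (auto simp: less_Suc_eq)

definition accumulate :: "bool \<Rightarrow> nat \<Rightarrow> nat \<Rightarrow> com" where
  "accumulate ex rb r = If (Eq (V rb) (N 0))
     (if ex then SKIP else Assign r (N 0)) (if ex then Assign r (N 1) else SKIP)"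

lemma big_step_accumulate:
  "big_step (accumulate ex rb r) s 2
     ((fst s)(r := if (fst s rb \<noteq> 0) = ex then of_bool ex else fst s r), snd s)"
  unfolding accumulate_def by (auto intro!: big_step_IfI big_step_SkipI big_step_AssignI)

definition quant_loop_body :: "bool \<Rightarrow> nat \<Rightarrow> com \<Rightarrow> nat \<Rightarrow> nat \<Rightarrow> com" where
  "quant_loop_body ex x body rb r = Seq body (Seq (accumulate ex rb r) (Assign x (Plus (V x) (N 1))))"

definition quant_loop :: "bool \<Rightarrow> nat \<Rightarrow> aexp \<Rightarrow> com \<Rightarrow> nat \<Rightarrow> nat \<Rightarrow> com" where
  "quant_loop ex x bnd body rb r = Seq (Assign r (N (of_bool (\<not> ex)))) (Seq (Assign x (N 0))
     (While (Less (V x) bnd) (quant_loop_body ex x body rb r)))"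

definition quant_loop_inv ::
    "bool \<Rightarrow> nat \<Rightarrow> nat \<Rightarrow> nat set \<Rightarrow> (state \<Rightarrow> bool) \<Rightarrow> state \<Rightarrow> nat \<Rightarrow> state \<Rightarrow> bool" where
  "quant_loop_inv ex x r R P s i s' \<longleftrightarrow> snd s' = snd s \<and>
     (\<forall>y. y \<notin> insert x (insert r R) \<longrightarrow> fst s' y = fst s y) \<and> fst s' x = i \<and>
     (fst s' r \<noteq> 0 \<longleftrightarrow> quant ex i (\<lambda>v. P (set_reg s x v)))"

lemma quant_loop_round:
  assumes body: "computes n body R rb P T" and n: "fst s' 0 = n"
    and regs: "x \<notin> R" "r \<notin> R" "x \<noteq> r"
    and ign: "ignores_regs P (insert r R)"
    and inv: "quant_loop_inv ex x r R P s i s'"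
  shows "\<exists>t s''. big_step (quant_loop_body ex x body rb r) s' t s'' \<and> t \<le> T + 3 \<and>
    quant_loop_inv ex x r R P s (Suc i) s''"
proof -
  obtain t1 s1 where b1: "big_step body s' t1 s1" "t1 \<le> T" "snd s1 = snd s'"
    "\<forall>y. y \<notin> R \<longrightarrow> fst s1 y = fst s' y" "fst s1 rb \<noteq> 0 \<longleftrightarrow> P s'"
    using body n unfolding computes_def by blast
  have "P s' = P (set_reg s x i)"
    by (rule ignores_regsD[OF ign])
      (use inv in \<open>auto simp: quant_loop_inv_def fst_set_reg snd_set_reg\<close>)
  then have P1: "fst s1 rb \<noteq> 0 \<longleftrightarrow> P (set_reg s x i)"
    using b1(5) by simp
  define s2 where "s2 = ((fst s1)(r := if (fst s1 rb \<noteq> 0) = ex then of_bool ex else fst s1 r), snd s1)"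
  define s3 where "s3 = ((fst s2)(x := Suc i), snd s2)"
  have x1: "fst s1 x = i" and r1: "fst s1 r = fst s' r"
    using b1(4) inv regs unfolding quant_loop_inv_def by auto
  have b2: "big_step (accumulate ex rb r) s1 2 s2"
    unfolding s2_def by (rule big_step_accumulate)
  have b3: "big_step (Assign x (Plus (V x) (N 1))) s2 1 s3"
    by (rule big_step_AssignI) (use x1 regs(3) in \<open>simp_all add: s2_def s3_def\<close>)
  have "big_step (quant_loop_body ex x body rb r) s' (t1 + (2 + 1)) s3"
    unfolding quant_loop_body_def by (rule Seq[OF b1(1) Seq[OF b2 b3]])
  moreover have "quant_loop_inv ex x r R P s (Suc i) s3"
    using inv b1(3,4) r1 P1 regs(3) unfolding quant_loop_inv_def s3_def s2_def quant_Suc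
    by (cases ex) auto
  ultimately show ?thesis
    using b1(2) by (intro exI conjI) auto
qed

lemma computes_quant_loop:
  assumes body: "computes n body R rb P T"
    and regs: "x \<notin> R" "r \<notin> R" "x \<noteq> r" "x \<noteq> 0" "r \<noteq> 0" "0 \<notin> R"
    and ign: "ignores_regs P (insert r R)"
    and bnd: "\<And>s. fst s 0 = n \<Longrightarrow> aval bnd s = B"
  shows "computes n (quant_loop ex x bnd body rb r) (insert x (insert r R)) r
           (\<lambda>s. quant ex B (\<lambda>v. P (set_reg s x v))) (3 + B * (T + 4))"
  unfolding computes_def
proof (intro allI impI)
  fix s :: state assume s: "fst s 0 = n"
  let ?I = "quant_loop_inv ex x r R P s"
  have n: "fst s' 0 = n" if "?I i s'" for i s'
    using that s regs unfolding quant_loop_inv_def by auto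
  have round: "bval (Less (V x) bnd) s' \<and>
      (\<exists>t s''. big_step (quant_loop_body ex x body rb r) s' t s'' \<and> t \<le> T + 3 \<and> ?I (Suc i) s'')"
    if "i < B" "?I i s'" for i s'
  proof
    show "bval (Less (V x) bnd) s'"
      using that bnd[OF n[OF that(2)]] unfolding quant_loop_inv_def by simp
    show "\<exists>t s''. big_step (quant_loop_body ex x body rb r) s' t s'' \<and> t \<le> T + 3 \<and> ?I (Suc i) s''"
      by (rule quant_loop_round[OF body n[OF that(2)] regs(1-3) ign that(2)])
  qed
  have stop: "\<not> bval (Less (V x) bnd) s'" if "?I B s'" for s'
    using that bnd[OF n[OF that]] unfolding quant_loop_inv_def by simp
  define s1 where "s1 = ((fst s)(r := of_bool (\<not> ex)), snd s)"
  define s0 where "s0 = ((fst s1)(x := 0), snd s1)"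
  have a1: "big_step (Assign r (N (of_bool (\<not> ex)))) s 1 s1"
    by (rule big_step_AssignI) (simp_all add: s1_def)
  have a2: "big_step (Assign x (N 0)) s1 1 s0"
    by (rule big_step_AssignI) (simp_all add: s0_def)
  have "?I 0 s0"
    using regs unfolding quant_loop_inv_def s0_def s1_def quant_0 by auto
  from big_step_While_count[where I = ?I and B = B and T = "T + 3", OF round stop this]
  obtain t s' where w: "big_step (While (Less (V x) bnd) (quant_loop_body ex x body rb r)) s0 t s'"
      "t \<le> 1 + B * (T + 3 + 1)" "?I B s'"
    by auto
  have "big_step (quant_loop ex x bnd body rb r) s (1 + (1 + t)) s'"
    unfolding quant_loop_def by (rule Seq[OF a1 Seq[OF a2 w(1)]])
  then show "\<exists>t s'. big_step (quant_loop ex x bnd body rb r) s t s' \<and> t \<le> 3 + B * (T + 4) \<and>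
      snd s' = snd s \<and> (\<forall>y. y \<notin> insert x (insert r R) \<longrightarrow> fst s' y = fst s y) \<and>
      (fst s' r \<noteq> 0) = quant ex B (\<lambda>v. P (set_reg s x v))"
    using w(2,3) unfolding quant_loop_inv_def
    by (intro exI[of _ "1 + (1 + t)"] exI[of _ s']) (auto simp: ac_simps)
qed

section \<open>Nested quantifier loops\<close>

text \<open>The program reads the bound of a quantifier \<open>(x, bnd, B)\<close> from \<open>bnd\<close>; its value
  \<open>B\<close> only enters the specification.\<close>

type_synonym quantifier = "nat \<times> aexp \<times> nat"

fun nest_result :: "quantifier list \<Rightarrow> nat \<Rightarrow> nat" where
  "nest_result [] rb = rb"
| "nest_result ((x, bnd, B) # qs) rb = Suc x"

fun quant_nest :: "bool \<Rightarrow> quantifier list \<Rightarrow> com \<Rightarrow> nat \<Rightarrow> com" where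
  "quant_nest ex [] body rb = body"
| "quant_nest ex ((x, bnd, B) # qs) body rb =
     quant_loop ex x bnd (quant_nest ex qs body rb) (nest_result qs rb) (Suc x)"

definition nest_regs :: "quantifier list \<Rightarrow> nat set \<Rightarrow> nat set" where
  "nest_regs qs R = R \<union> fst ` set qs \<union> Suc ` fst ` set qs"

fun nest_time :: "quantifier list \<Rightarrow> nat \<Rightarrow> nat" where
  "nest_time [] T = T"
| "nest_time ((x, bnd, B) # qs) T = 3 + B * (nest_time qs T + 4)"

fun quants :: "bool \<Rightarrow> quantifier list \<Rightarrow> (state \<Rightarrow> bool) \<Rightarrow> state \<Rightarrow> bool" where
  "quants ex [] P s = P s"
| "quants ex ((x, bnd, B) # qs) P s = quant ex B (\<lambda>v. quants ex qs P (set_reg s x v))"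

lemma ignores_regs_quants:
  "ignores_regs P R \<Longrightarrow> ignores_regs (quants ex qs P) (R \<union> fst ` set qs)"
proof (induction qs arbitrary: R)
  case (Cons q qs)
  obtain x bnd B where q: "q = (x, bnd, B)"
    by (cases q) auto
  show ?case
    unfolding ignores_regs_def q quants.simps
  proof (intro allI impI)
    fix s s' :: state
    assume "snd s = snd s'" "\<forall>y. y \<notin> R \<union> fst ` set ((x, bnd, B) # qs) \<longrightarrow> fst s y = fst s' y"
    then have "quants ex qs P (set_reg s x v) = quants ex qs P (set_reg s' x v)" for v
      by (intro ignores_regsD[OF Cons.IH[OF Cons.prems]]) (auto simp: q fst_set_reg snd_set_reg)
    then show "quant ex B (\<lambda>v. quants ex qs P (set_reg s x v)) =
        quant ex B (\<lambda>v. quants ex qs P (set_reg s' x v))"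
      by simp
  qed
qed (simp add: ignores_regs_def)

lemma computes_quant_nest:
  assumes body: "computes n body R rb P T" and "0 \<notin> R"
    and "ignores_regs P (R \<union> Suc ` fst ` set qs)"
    and "distinct (map fst qs)"
    and "\<forall>x\<in>fst ` set qs. even x \<and> x \<noteq> 0 \<and> x \<notin> R \<and> Suc x \<notin> R"
    and "\<forall>(x, bnd, B)\<in>set qs. \<forall>s. fst s 0 = n \<longrightarrow> aval bnd s = B"
  shows "computes n (quant_nest ex qs body rb) (nest_regs qs R) (nest_result qs rb) (quants ex qs P)
           (nest_time qs T)"
  using assms(3-)
proof (induction qs)
  case Nil
  then show ?case
    using body by (simp add: nest_regs_def)
next
  case (Cons q qs)
  obtain x bnd B where q: "q = (x, bnd, B)"
    by (cases q) auto
  have IH: "computes n (quant_nest ex qs body rb) (nest_regs qs R) (nest_result qs rb) (quants ex qs P)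
      (nest_time qs T)"
    using Cons.IH Cons.prems q by (auto intro: ignores_regs_mono)
  have x: "even x" "x \<noteq> 0" "x \<notin> R" "Suc x \<notin> R" "x \<notin> fst ` set qs"
    using Cons.prems(2,3) q by auto
  have "Suc y \<noteq> x" "y \<noteq> Suc x" "Suc y \<noteq> 0" if "y \<in> fst ` set qs" for y
    using that x(1) Cons.prems(3) by auto
  then have "x \<notin> nest_regs qs R" "Suc x \<notin> nest_regs qs R" "0 \<notin> nest_regs qs R"
    using x assms(2) Cons.prems(3) unfolding nest_regs_def by auto
  moreover have "ignores_regs (quants ex qs P) (insert (Suc x) (nest_regs qs R))"
    by (rule ignores_regs_mono[OF ignores_regs_quants[OF Cons.prems(1)]])
      (auto simp: q nest_regs_def)
  moreover have "\<forall>s. fst s 0 = n \<longrightarrow> aval bnd s = B"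
    using Cons.prems(4) q by auto
  ultimately have "computes n (quant_loop ex x bnd (quant_nest ex qs body rb) (nest_result qs rb) (Suc x))
      (insert x (insert (Suc x) (nest_regs qs R))) (Suc x)
      (\<lambda>s. quant ex B (\<lambda>v. quants ex qs P (set_reg s x v))) (3 + B * (nest_time qs T + 4))"
    using x(2) by (intro computes_quant_loop[OF IH]) auto
  moreover have "insert x (insert (Suc x) (nest_regs qs R)) = nest_regs (q # qs) R"
    unfolding nest_regs_def q by auto
  ultimately show ?case
    by (simp add: q)
qed

lemma set_regs_set_reg:
  "x \<notin> R \<Longrightarrow> set_regs (set_reg s x v) R f = set_regs s (insert x R) (f(x := v))"
  unfolding set_regs_def set_reg_def by (auto simp: fun_eq_iff)

lemma quants_True_iff:
  assumes "distinct (map fst qs)"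
  shows "quants True qs P s \<longleftrightarrow>
    (\<exists>f. (\<forall>(x, bnd, B)\<in>set qs. f x < B) \<and> P (set_regs s (fst ` set qs) f))"
  using assms
proof (induction qs arbitrary: s)
  case Nil
  have "set_regs s {} f = s" for f
    unfolding set_regs_def by simp
  then show ?case
    by simp
next
  case (Cons q qs)
  obtain x bnd B where q: "q = (x, bnd, B)"
    by (cases q) auto
  have x: "x \<notin> fst ` set qs"
    using Cons.prems q by auto
  have upd: "set_regs (set_reg s x v) (fst ` set qs) f = set_regs s (fst ` set (q # qs)) (f(x := v))"
    for f v
    using set_regs_set_reg[OF x] q by simp
  have "quants True (q # qs) P s \<longleftrightarrow> (\<exists>v<B. \<exists>f. (\<forall>(x, bnd, B)\<in>set qs. f x < B) \<and>
      P (set_regs s (fst ` set (q # qs)) (f(x := v))))"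
    using Cons.IH Cons.prems q by (simp add: quant_def upd)
  also have "\<dots> \<longleftrightarrow> (\<exists>f. (\<forall>(x, bnd, B)\<in>set (q # qs). f x < B) \<and> P (set_regs s (fst ` set (q # qs)) f))"
  proof
    assume "\<exists>v<B. \<exists>f. (\<forall>(x, bnd, B)\<in>set qs. f x < B) \<and> P (set_regs s (fst ` set (q # qs)) (f(x := v)))"
    then obtain v f where "v < B" "\<forall>(x, bnd, B)\<in>set qs. f x < B"
        "P (set_regs s (fst ` set (q # qs)) (f(x := v)))"
      by blast
    moreover from this have "\<forall>(y, bnd, B)\<in>set (q # qs). (f(x := v)) y < B"
      using x q by (force simp: image_iff)
    ultimately show "\<exists>f. (\<forall>(x, bnd, B)\<in>set (q # qs). f x < B) \<and> P (set_regs s (fst ` set (q # qs)) f)"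
      by blast
  next
    assume "\<exists>f. (\<forall>(x, bnd, B)\<in>set (q # qs). f x < B) \<and> P (set_regs s (fst ` set (q # qs)) f)"
    then obtain f where "\<forall>(x, bnd, B)\<in>set (q # qs). f x < B" "P (set_regs s (fst ` set (q # qs)) f)"
      by blast
    then show "\<exists>v<B. \<exists>f. (\<forall>(x, bnd, B)\<in>set qs. f x < B) \<and>
        P (set_regs s (fst ` set (q # qs)) (f(x := v)))"
      using q by (intro exI[of _ "f x"] conjI exI[of _ f]) auto
  qed
  finally show ?case .
qed

lemma nest_time_bound: "nest_time qs T + 1 \<le> (\<Prod>(x, bnd, B)\<leftarrow>qs. 8 * (B + 1)) * (T + 1)"
proof (induction qs)
  case (Cons q qs)
  obtain x bnd B where q: "q = (x, bnd, B)"
    by (cases q) auto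
  define X where "X = (\<Prod>(x, bnd, B)\<leftarrow>qs. 8 * (B + 1)) * (T + 1)"
  have IH: "nest_time qs T + 1 \<le> X"
    using Cons.IH unfolding X_def .
  have "B * 3 \<le> B * (7 * X)"
    using IH by (intro mult_le_mono2) simp
  then have "4 + B * (nest_time qs T + 1) + 3 * B \<le> 8 * (B + 1) * X"
    using IH mult_le_mono2[OF IH, of B] by (simp add: algebra_simps)
  then show ?case
    by (simp add: q X_def algebra_simps)
qed simp

lemma quant_nest_ignores_bounds:
  assumes "map (\<lambda>(x, bnd, B). (x, bnd)) qs = map (\<lambda>(x, bnd, B). (x, bnd)) qs'"
  shows "quant_nest ex qs body rb = quant_nest ex qs' body rb \<and> nest_result qs rb = nest_result qs' rb"
  using assms
proof (induction qs arbitrary: qs')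
  case Nil
  then show ?case
    by simp
next
  case (Cons q qs)
  then obtain q' qs'' where qs': "qs' = q' # qs''"
    by (cases qs') auto
  obtain x bnd B x' bnd' B' where q: "q = (x, bnd, B)" and q': "q' = (x', bnd', B')"
    by (cases q; cases q') auto
  have "x' = x" "bnd' = bnd" "map (\<lambda>(x, bnd, B). (x, bnd)) qs = map (\<lambda>(x, bnd, B). (x, bnd)) qs''"
    using Cons.prems unfolding qs' q q' by simp_all
  then show ?case
    using Cons.IH q q' qs' by simp
qed

section \<open>The decision procedure\<close>

text \<open>Register layout: 0 holds \<open>n\<close>, 1 the answer, 2 and 4 the column \<open>j\<close> and the row \<open>l\<close>,
  and the registers below the index, diagonal bit and coefficient of the \<open>i\<close>-th patched column.
  Loop results live in odd registers.\<close>

definition reg_col :: "nat \<Rightarrow> nat" where "reg_col i = 6 * i + 6"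
definition reg_diag :: "nat \<Rightarrow> nat" where "reg_diag i = 6 * i + 8"
definition reg_coef :: "nat \<Rightarrow> nat" where "reg_coef i = 6 * i + 10"

lemma regs_distinct [simp]:
  "reg_col i \<noteq> reg_diag j" "reg_col i \<noteq> reg_coef j" "reg_diag i \<noteq> reg_coef j"
  "reg_diag i \<noteq> reg_col j" "reg_coef i \<noteq> reg_col j" "reg_coef i \<noteq> reg_diag j"
  unfolding reg_col_def reg_diag_def reg_coef_def by presburger+

lemma regs_inj [simp]:
  "reg_col i = reg_col j \<longleftrightarrow> i = j" "reg_diag i = reg_diag j \<longleftrightarrow> i = j"
  "reg_coef i = reg_coef j \<longleftrightarrow> i = j"
  unfolding reg_col_def reg_diag_def reg_coef_def by auto

lemma inj_regs: "inj reg_col" "inj reg_diag" "inj reg_coef"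
  by (auto intro: injI)

lemma regs_even [simp]: "even (reg_col i)" "even (reg_diag i)" "even (reg_coef i)"
  unfolding reg_col_def reg_diag_def reg_coef_def by auto

lemma regs_gt_5 [simp]: "5 < reg_col i" "5 < reg_diag i" "5 < reg_coef i"
  and regs_neq_small [simp]: "reg_col i \<noteq> 0" "reg_diag i \<noteq> 0" "reg_coef i \<noteq> 0"
    "reg_col i \<noteq> 2" "reg_diag i \<noteq> 2" "reg_coef i \<noteq> 2"
    "reg_col i \<noteq> 4" "reg_diag i \<noteq> 4" "reg_coef i \<noteq> 4"
  unfolding reg_col_def reg_diag_def reg_coef_def by auto

lemma even_neq_Suc_even [simp]: "even a \<Longrightarrow> even b \<Longrightarrow> a \<noteq> Suc b \<and> Suc b \<noteq> a"
  by auto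

definition bit_of :: "nat \<Rightarrow> bit" where
  "bit_of v = of_bool (v = 1)"

lemma bit_of_of_bool_eq_1: "bit_of (of_bool (b = 1)) = b"
  using bit_cases_0_1[of b] by (auto simp: bit_of_def)

definition entry_test :: "nat \<Rightarrow> bexp" where
  "entry_test i = Xor (And (Eq (V (reg_col i)) (V 4)) (Eq (V (reg_diag i)) (N 1)))
     (And (Not (Eq (V (reg_col i)) (V 4))) (Cell (N 0) (V 4) (V (reg_col i))))"

fun xor_sum :: "nat list \<Rightarrow> bexp" where
  "xor_sum [] = Bc False"
| "xor_sum (i # is) = Xor (And (Eq (V (reg_coef i)) (N 1)) (entry_test i)) (xor_sum is)"

definition check_entry :: "nat \<Rightarrow> bexp" where
  "check_entry k = Not (And (Not (Eq (V 4) (V 2))) (Xor (xor_sum [0..<k]) (Cell (N 0) (V 4) (V 2))))"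

lemma check_entry_ignores_odd: "ignores_regs (bval (check_entry k)) {y. odd y}"
  unfolding ignores_regs_def
proof (intro allI impI)
  fix s s' :: state
  assume mem: "snd s = snd s'" and even: "\<forall>y. y \<notin> {y. odd y} \<longrightarrow> fst s y = fst s' y"
  then have [simp]: "fst s (reg_col i) = fst s' (reg_col i)" "fst s (reg_diag i) = fst s' (reg_diag i)"
    "fst s (reg_coef i) = fst s' (reg_coef i)" "fst s 2 = fst s' 2" "fst s 4 = fst s' 4" for i
    by simp_all
  have "bval (xor_sum is) s = bval (xor_sum is) s'" for "is"
    by (induction "is") (simp_all add: entry_test_def mem)
  then show "bval (check_entry k) s = bval (check_entry k) s'"
    by (simp add: check_entry_def mem)
qed

lemma snd_init_state: "snd (init_state n M) a i j \<longleftrightarrow> a = 0 \<and> i < n \<and> j < n \<and> M $$ (i, j) = 1"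
  unfolding init_state_def by simp

lemma of_bool_eq_1_bit: "(of_bool (b = 1) :: bit) = b"
  using bit_cases_0_1[of b] by auto

lemma bval_entry_test:
  assumes "snd s = snd (init_state n M)" "fst s 4 < n"
  shows "(of_bool (fst s (reg_coef i) = 1 \<and> bval (entry_test i) s) :: bit) =
    bit_of (fst s (reg_coef i)) * patched_col M n (fst s (reg_col i)) (bit_of (fst s (reg_diag i))) (fst s 4)"
  using assms unfolding entry_test_def patched_col_def bit_of_def
  by (auto simp: snd_init_state of_bool_eq_1_bit)

lemma bval_xor_sum:
  assumes "distinct is" "snd s = snd (init_state n M)" "fst s 4 < n"
  shows "(of_bool (bval (xor_sum is) s) :: bit) = (\<Sum>i\<in>set is.
    bit_of (fst s (reg_coef i)) * patched_col M n (fst s (reg_col i)) (bit_of (fst s (reg_diag i))) (fst s 4))"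
  using assms(1)
proof (induction "is")
  case (Cons i "is")
  have "(of_bool (bval (xor_sum (i # is)) s) :: bit) =
      of_bool (fst s (reg_coef i) = 1 \<and> bval (entry_test i) s) + of_bool (bval (xor_sum is) s)"
    by (cases "fst s (reg_coef i) = 1 \<and> bval (entry_test i) s"; cases "bval (xor_sum is) s") simp_all
  then show ?case
    using Cons bval_entry_test[OF assms(2,3)] by (simp del: add_bit_eq_xor mult_bit_eq_and)
qed simp

lemma bval_check_entry:
  assumes "snd s = snd (init_state n M)" "fst s 4 < n" "fst s 2 < n"
  shows "bval (check_entry k) s \<longleftrightarrow> (fst s 4 \<noteq> fst s 2 \<longrightarrow> (\<Sum>i<k. bit_of (fst s (reg_coef i)) *
    patched_col M n (fst s (reg_col i)) (bit_of (fst s (reg_diag i))) (fst s 4)) = M $$ (fst s 4, fst s 2))"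
proof -
  have "bval (xor_sum [0..<k]) s = (M $$ (fst s 4, fst s 2) = 1) \<longleftrightarrow>
      (of_bool (bval (xor_sum [0..<k]) s) :: bit) = M $$ (fst s 4, fst s 2)"
    using bit_cases_0_1[of "M $$ (fst s 4, fst s 2)"] by (cases "bval (xor_sum [0..<k]) s") auto
  then show ?thesis
    using assms bval_xor_sum[OF _ assms(1,2), of "[0..<k]"]
    by (auto simp: check_entry_def snd_init_state atLeast0LessThan simp del: add_bit_eq_xor mult_bit_eq_and)
qed

definition row_quant :: "nat \<Rightarrow> quantifier list" where "row_quant n = [(4, V 0, n)]"
definition col_quant :: "nat \<Rightarrow> quantifier list" where "col_quant n = [(2, V 0, n)]"
definition coef_quants :: "nat \<Rightarrow> quantifier list" where
  "coef_quants k = map (\<lambda>i. (reg_coef i, N 2, 2)) [0..<k]"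
definition basis_quants :: "nat \<Rightarrow> nat \<Rightarrow> quantifier list" where
  "basis_quants k n = map (\<lambda>i. (reg_col i, Plus (V 0) (N 1), n + 1)) [0..<k] @
     map (\<lambda>i. (reg_diag i, N 2, 2)) [0..<k]"

lemma fst_set_basis_quants: "fst ` set (basis_quants k n) = reg_col ` {..<k} \<union> reg_diag ` {..<k}"
  unfolding basis_quants_def by (simp add: image_Un image_image atLeast0LessThan)

lemma distinct_basis_quants: "distinct (map fst (basis_quants k n))"
  by (auto simp: basis_quants_def distinct_map inj_on_def)

definition cover_prog :: "nat \<Rightarrow> nat \<Rightarrow> com" where
  "cover_prog k n = quant_nest False (col_quant n)
     (quant_nest True (coef_quants k) (quant_nest False (row_quant n) (test_cmd (check_entry k) 1) 1) 5)
     (nest_result (coef_quants k) 5)"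

definition cover_spec :: "nat \<Rightarrow> nat \<Rightarrow> state \<Rightarrow> bool" where
  "cover_spec k n =
     quants False (col_quant n) (quants True (coef_quants k) (quants False (row_quant n) (bval (check_entry k))))"

definition cover_time :: "nat \<Rightarrow> nat \<Rightarrow> nat" where
  "cover_time k n = nest_time (col_quant n) (nest_time (coef_quants k) (nest_time (row_quant n) 2))"

definition search_prog :: "nat \<Rightarrow> nat \<Rightarrow> com" where
  "search_prog k n = quant_nest True (basis_quants k n) (cover_prog k n) 3"

definition search_spec :: "nat \<Rightarrow> nat \<Rightarrow> state \<Rightarrow> bool" where
  "search_spec k n = quants True (basis_quants k n) (cover_spec k n)"

definition search_time :: "nat \<Rightarrow> nat \<Rightarrow> nat" where
  "search_time k n = nest_time (basis_quants k n) (cover_time k n)"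

lemma cover_spec_ignores_regs: "ignores_regs (cover_spec k n) ({y. odd y} \<union> {2, 4} \<union> reg_coef ` {..<k})"
proof -
  have "ignores_regs (quants False (row_quant n) (bval (check_entry k))) ({y. odd y} \<union> {4})"
    using ignores_regs_quants[OF check_entry_ignores_odd, of False "row_quant n"]
    by (simp add: row_quant_def)
  from ignores_regs_quants[OF this, of True "coef_quants k"]
  have "ignores_regs (quants True (coef_quants k) (quants False (row_quant n) (bval (check_entry k))))
      ({y. odd y} \<union> {4} \<union> reg_coef ` {..<k})"
    by (simp add: coef_quants_def image_image atLeast0LessThan)
  from ignores_regs_quants[OF this, of False "col_quant n"] show ?thesis
    unfolding cover_spec_def by (simp add: col_quant_def insert_commute)
qed

lemma computes_cover_prog:
  "computes n (cover_prog k n) ({1, 2, 3, 4, 5} \<union> reg_coef ` {..<k} \<union> Suc ` reg_coef ` {..<k}) 3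
     (cover_spec k n) (cover_time k n)"
proof -
  let ?row = "quant_nest False (row_quant n) (test_cmd (check_entry k) 1) 1"
  let ?P = "quants False (row_quant n) (bval (check_entry k))"
  have "computes n ?row (nest_regs (row_quant n) {1}) (nest_result (row_quant n) 1) ?P
      (nest_time (row_quant n) 2)"
    by (rule computes_quant_nest[OF computes_test_cmd])
      (auto simp: row_quant_def intro: ignores_regs_mono[OF check_entry_ignores_odd])
  then have row: "computes n ?row {1, 4, 5} 5 ?P (nest_time (row_quant n) 2)"
    by (simp add: row_quant_def nest_regs_def insert_commute)
  have "ignores_regs ?P ({y. odd y} \<union> {4})"
    using ignores_regs_quants[OF check_entry_ignores_odd, of False "row_quant n"]
    by (simp add: row_quant_def)
  then have coef: "computes n (quant_nest True (coef_quants k) ?row 5)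
      (nest_regs (coef_quants k) {1, 4, 5}) (nest_result (coef_quants k) 5) (quants True (coef_quants k) ?P)
      (nest_time (coef_quants k) (nest_time (row_quant n) 2))"
    by (intro computes_quant_nest[OF row])
      (auto simp: coef_quants_def distinct_map inj_on_def reg_coef_def elim: ignores_regs_mono)
  have "ignores_regs (quants True (coef_quants k) ?P) ({y. odd y} \<union> {4} \<union> reg_coef ` {..<k})"
    using ignores_regs_quants[OF \<open>ignores_regs ?P _\<close>, of True "coef_quants k"]
    by (simp add: coef_quants_def image_image atLeast0LessThan)
  then have "computes n (cover_prog k n) (nest_regs (col_quant n) (nest_regs (coef_quants k) {1, 4, 5}))
      (nest_result (col_quant n) (nest_result (coef_quants k) 5)) (cover_spec k n) (cover_time k n)"
    unfolding cover_prog_def cover_spec_def cover_time_def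
    by (intro computes_quant_nest[OF coef])
      (auto simp: col_quant_def coef_quants_def nest_regs_def reg_coef_def elim: ignores_regs_mono)
  moreover have "nest_regs (col_quant n) (nest_regs (coef_quants k) {1, 4, 5}) =
      {1, 2, 3, 4, 5} \<union> reg_coef ` {..<k} \<union> Suc ` reg_coef ` {..<k}"
    by (auto simp: nest_regs_def col_quant_def coef_quants_def image_image atLeast0LessThan)
  ultimately show ?thesis
    by (simp add: col_quant_def)
qed

lemma computes_regs_mono: "computes n c R r P T \<Longrightarrow> R \<subseteq> R' \<Longrightarrow> computes n c R' r P T"
  unfolding computes_def by blast

lemma computes_search_prog:
  "computes n (search_prog k n) UNIV (nest_result (basis_quants k n) 3) (search_spec k n) (search_time k n)"
proof -
  let ?R = "{1, 2, 3, 4, 5} \<union> reg_coef ` {..<k} \<union> Suc ` reg_coef ` {..<k}"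
  have "computes n (search_prog k n) (nest_regs (basis_quants k n) ?R)
      (nest_result (basis_quants k n) 3) (search_spec k n) (search_time k n)"
    unfolding search_prog_def search_spec_def search_time_def
  proof (rule computes_quant_nest[OF computes_cover_prog])
    show "ignores_regs (cover_spec k n) (?R \<union> Suc ` fst ` set (basis_quants k n))"
      by (rule ignores_regs_mono[OF cover_spec_ignores_regs]) (auto simp: fst_set_basis_quants)
    show "\<forall>x\<in>fst ` set (basis_quants k n). even x \<and> x \<noteq> 0 \<and> x \<notin> ?R \<and> Suc x \<notin> ?R"
    proof
      fix x assume "x \<in> fst ` set (basis_quants k n)"
      then have "even x" "5 < x" "x \<notin> range reg_coef"
        unfolding fst_set_basis_quants by auto
      then show "even x \<and> x \<noteq> 0 \<and> x \<notin> ?R \<and> Suc x \<notin> ?R"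
        by auto
    qed
    show "\<forall>(x, bnd, B)\<in>set (basis_quants k n). \<forall>s. fst s 0 = n \<longrightarrow> aval bnd s = B"
      by (auto simp: basis_quants_def)
  qed (auto simp: distinct_basis_quants)
  then show ?thesis
    by (rule computes_regs_mono) simp
qed

lemma quants_row_quant: "quants False (row_quant n) P s \<longleftrightarrow> (\<forall>l<n. P (set_reg s 4 l))"
  and quants_col_quant: "quants False (col_quant n) P s \<longleftrightarrow> (\<forall>j<n. P (set_reg s 2 j))"
  by (simp_all add: row_quant_def col_quant_def quant_def)

lemma quants_coef_quants:
  "quants True (coef_quants k) P s \<longleftrightarrow>
    (\<exists>g. (\<forall>i<k. g (reg_coef i) < 2) \<and> P (set_regs s (reg_coef ` {..<k}) g))"
  using quants_True_iff[of "coef_quants k"]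
  by (simp add: coef_quants_def distinct_map inj_on_def image_image atLeast0LessThan, simp add: Ball_def)

lemma quants_basis_quants:
  "quants True (basis_quants k n) P s \<longleftrightarrow> (\<exists>f. (\<forall>i<k. f (reg_col i) < n + 1 \<and> f (reg_diag i) < 2) \<and>
    P (set_regs s (reg_col ` {..<k} \<union> reg_diag ` {..<k}) f))"
proof -
  have "(\<forall>(x, bnd, B)\<in>set (basis_quants k n). f x < B) \<longleftrightarrow>
      (\<forall>i<k. f (reg_col i) < n + 1 \<and> f (reg_diag i) < 2)" for f
    by (simp add: basis_quants_def ball_Un Ball_image_comp atLeast0LessThan Ball_def, blast)
  then show ?thesis
    by (simp add: quants_True_iff[OF distinct_basis_quants] fst_set_basis_quants)
qed

lemma search_spec_init_state_iff:
  "search_spec k n (init_state n M) \<longleftrightarrow>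
    (\<exists>f. (\<forall>i<k. f (reg_col i) < n + 1 \<and> f (reg_diag i) < 2) \<and> (\<forall>j<n. \<exists>g. (\<forall>i<k. g (reg_coef i) < 2) \<and>
      off_diag_comb M n k (\<lambda>i. f (reg_col i)) (\<lambda>i. bit_of (f (reg_diag i))) (\<lambda>i. bit_of (g (reg_coef i))) j))"
  (is "_ \<longleftrightarrow> ?rhs")
proof -
  define S where "S f j g l = set_reg (set_regs (set_reg (set_regs (init_state n M)
      (reg_col ` {..<k} \<union> reg_diag ` {..<k}) f) 2 j) (reg_coef ` {..<k}) g) 4 l" for f j g l
  have entry: "bval (check_entry k) (S f j g l) \<longleftrightarrow> (l \<noteq> j \<longrightarrow>
      (\<Sum>i<k. bit_of (g (reg_coef i)) * patched_col M n (f (reg_col i)) (bit_of (f (reg_diag i))) l)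
        = M $$ (l, j))"
    if "j < n" "l < n" for f j g l
  proof -
    have "fst (S f j g l) (reg_coef i) = g (reg_coef i)" "fst (S f j g l) (reg_col i) = f (reg_col i)"
      "fst (S f j g l) (reg_diag i) = f (reg_diag i)" if "i < k" for i
      using that by (auto simp: S_def fst_set_reg fst_set_regs)
    moreover have "snd (S f j g l) = snd (init_state n M)" "fst (S f j g l) 4 = l" "fst (S f j g l) 2 = j"
      by (auto simp: S_def fst_set_reg fst_set_regs snd_set_reg snd_set_regs)
    ultimately show ?thesis
      using bval_check_entry[of "S f j g l" n M k] that by simp
  qed
  have "search_spec k n (init_state n M) \<longleftrightarrow> (\<exists>f. (\<forall>i<k. f (reg_col i) < n + 1 \<and> f (reg_diag i) < 2) \<and>
      (\<forall>j<n. \<exists>g. (\<forall>i<k. g (reg_coef i) < 2) \<and> (\<forall>l<n. bval (check_entry k) (S f j g l))))"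
    by (simp add: search_spec_def cover_spec_def quants_row_quant quants_col_quant quants_coef_quants
        quants_basis_quants S_def)
  also have "\<dots> \<longleftrightarrow> ?rhs"
    using entry by (simp add: off_diag_comb_def del: add_bit_eq_xor mult_bit_eq_and cong: conj_cong)
  finally show ?thesis .
qed

lemma ex_bit_regs_iff:
  fixes r :: "nat \<Rightarrow> nat"
  assumes "inj r"
  shows "(\<exists>g. (\<forall>i<k. g (r i) < 2) \<and> P (\<lambda>i. bit_of (g (r i)))) \<longleftrightarrow> (\<exists>C. P C)"
proof
  assume "\<exists>C. P C"
  then obtain C where "P C" ..
  define g :: "nat \<Rightarrow> nat" where "g y = of_bool (C (inv_into UNIV r y) = 1)" for y
  have g: "g (r i) = of_bool (C i = 1)" for i
    by (simp add: g_def inv_f_f[OF assms])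
  have "(\<lambda>i. bit_of (g (r i))) = C"
    by (simp add: g bit_of_of_bool_eq_1)
  with \<open>P C\<close> show "\<exists>g. (\<forall>i<k. g (r i) < 2) \<and> P (\<lambda>i. bit_of (g (r i)))"
    by (intro exI[of _ g]) (simp add: g)
next
  assume "\<exists>g. (\<forall>i<k. g (r i) < 2) \<and> P (\<lambda>i. bit_of (g (r i)))"
  then show "\<exists>C. P C"
    by blast
qed

lemma ex_two_regs_iff:
  fixes r1 r2 :: "nat \<Rightarrow> nat"
  assumes "inj r1" "inj r2" "\<And>i j. r1 i \<noteq> r2 j"
  shows "(\<exists>f. (\<forall>i<k. f (r1 i) < B \<and> f (r2 i) < 2) \<and> P (\<lambda>i. f (r1 i)) (\<lambda>i. bit_of (f (r2 i)))) \<longleftrightarrow>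
    (\<exists>X G. (\<forall>i<k. X i < B) \<and> P X G)"
proof
  assume "\<exists>X G. (\<forall>i<k. X i < B) \<and> P X G"
  then obtain X G where XG: "\<forall>i<k. X i < B" "P X G"
    by blast
  define f :: "nat \<Rightarrow> nat"
    where "f y = (if y \<in> range r1 then X (inv_into UNIV r1 y) else of_bool (G (inv_into UNIV r2 y) = 1))" for y
  have "r2 i \<notin> range r1" for i
    using assms(3) by (metis rangeE)
  then have f1: "f (r1 i) = X i" and f2: "f (r2 i) = of_bool (G i = 1)" for i
    by (simp_all add: f_def inv_f_f[OF assms(1)] inv_f_f[OF assms(2)])
  have "(\<lambda>i. f (r1 i)) = X" "(\<lambda>i. bit_of (f (r2 i))) = G"
    by (simp_all add: f1 f2 bit_of_of_bool_eq_1)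
  with XG show "\<exists>f. (\<forall>i<k. f (r1 i) < B \<and> f (r2 i) < 2) \<and> P (\<lambda>i. f (r1 i)) (\<lambda>i. bit_of (f (r2 i)))"
    by (intro exI[of _ f]) (simp add: f1 f2)
next
  assume "\<exists>f. (\<forall>i<k. f (r1 i) < B \<and> f (r2 i) < 2) \<and> P (\<lambda>i. f (r1 i)) (\<lambda>i. bit_of (f (r2 i)))"
  then obtain f where "\<forall>i<k. f (r1 i) < B" "P (\<lambda>i. f (r1 i)) (\<lambda>i. bit_of (f (r2 i)))"
    by blast
  then show "\<exists>X G. (\<forall>i<k. X i < B) \<and> P X G"
    by (intro exI[of _ "\<lambda>i. f (r1 i)"] exI[of _ "\<lambda>i. bit_of (f (r2 i))"]) simp
qed

lemma search_spec_iff_minrank_le: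
  assumes "M \<in> carrier_mat n n"
  shows "search_spec k n (init_state n M) \<longleftrightarrow> minrank M \<le> k"
proof -
  have "(\<exists>g. (\<forall>i<k. g (reg_coef i) < 2) \<and> off_diag_comb M n k X G (\<lambda>i. bit_of (g (reg_coef i))) j)
      \<longleftrightarrow> (\<exists>C. off_diag_comb M n k X G C j)" for X G j
    by (rule ex_bit_regs_iff[OF inj_regs(3)])
  then have "search_spec k n (init_state n M) \<longleftrightarrow> (\<exists>f. (\<forall>i<k. f (reg_col i) < n + 1 \<and> f (reg_diag i) < 2) \<and>
      off_diag_spanned M n k (\<lambda>i. f (reg_col i)) (\<lambda>i. bit_of (f (reg_diag i))))"
    by (simp add: search_spec_init_state_iff off_diag_spanned_def)
  also have "\<dots> \<longleftrightarrow> (\<exists>X G. (\<forall>i<k. X i < n + 1) \<and> off_diag_spanned M n k X G)"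
    by (rule ex_two_regs_iff[OF inj_regs(1,2) regs_distinct(1)])
  also have "\<dots> \<longleftrightarrow> minrank M \<le> k"
    by (simp add: minrank_le_iff_off_diag_spanned[OF assms] less_Suc_eq_le)
  finally show ?thesis .
qed

lemma search_prog_indep:
  "search_prog k n = search_prog k 0" "nest_result (basis_quants k n) 3 = nest_result (basis_quants k 0) 3"
proof -
  have "quant_nest ex (basis_quants k n) body rb = quant_nest ex (basis_quants k 0) body rb \<and>
      nest_result (basis_quants k n) rb = nest_result (basis_quants k 0) rb" for ex body rb
    by (rule quant_nest_ignores_bounds) (simp add: basis_quants_def)
  moreover have "quant_nest ex (col_quant n) body rb = quant_nest ex (col_quant 0) body rb"
    "quant_nest ex (row_quant n) body rb = quant_nest ex (row_quant 0) body rb" for ex body rb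
    by (rule quant_nest_ignores_bounds[THEN conjunct1], simp add: col_quant_def row_quant_def)+
  ultimately show "search_prog k n = search_prog k 0" "nest_result (basis_quants k n) 3 = nest_result (basis_quants k 0) 3"
    by (simp_all add: search_prog_def cover_prog_def)
qed

text \<open>The bounds stored in the quantifier lists never reach the program, so the program built
  for \<open>n = 0\<close> serves for every \<open>n\<close>.\<close>

definition decide_prog :: "nat \<Rightarrow> com" where
  "decide_prog k = Seq (search_prog k 0) (test_cmd (Not (Eq (V (nest_result (basis_quants k 0) 3)) (N 0))) 1)"

lemma decide_prog_correct:
  assumes M: "M \<in> carrier_mat n n"
  shows "\<exists>t s'. big_step (decide_prog k) (init_state n M) t s' \<and> t \<le> search_time k n + 2 \<and>
    (accepts s' \<longleftrightarrow> minrank M \<le> k)"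
proof -
  define r where "r = nest_result (basis_quants k 0) 3"
  have "fst (init_state n M) 0 = n"
    by (simp add: init_state_def)
  with computes_search_prog[of n k]
  obtain t s' where search: "big_step (search_prog k 0) (init_state n M) t s'" "t \<le> search_time k n"
    "fst s' r \<noteq> 0 \<longleftrightarrow> search_spec k n (init_state n M)"
    unfolding computes_def r_def search_prog_indep[of k n] by blast
  define s'' where "s'' = ((fst s')(1 := of_bool (bval (Not (Eq (V r) (N 0))) s')), snd s')"
  have "big_step (decide_prog k) (init_state n M) (t + 2) s''"
    unfolding decide_prog_def r_def[symmetric] s''_def using search(1) big_step_test_cmd by (rule Seq)
  moreover have "accepts s'' \<longleftrightarrow> minrank M \<le> k"
    using search(3) search_spec_iff_minrank_le[OF M] unfolding accepts_def s''_def by simp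
  ultimately show ?thesis
    using search(2) by (intro exI[of _ "t + 2"] exI[of _ s'']) simp
qed

lemma search_time_bound: "search_time k n + 2 \<le> 193 * 16 ^ k * 24 ^ k * 24 ^ k * (n + 1) ^ (k + 2)"
proof -
  define T1 where "T1 = nest_time (row_quant n) 2"
  define T2 where "T2 = nest_time (coef_quants k) T1"
  define T3 where "T3 = nest_time (col_quant n) T2"
  have map_const: "map (\<lambda>i. c) [0..<k] = replicate k c" for c :: nat
    by (simp add: map_replicate_const)
  have T1: "T1 + 1 \<le> 24 * (n + 1)"
    using nest_time_bound[of "row_quant n" 2] by (simp add: T1_def row_quant_def)
  have "T2 + 1 \<le> 24 ^ k * (T1 + 1)"
    using nest_time_bound[of "coef_quants k" T1] by (simp add: T2_def coef_quants_def o_def map_const)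
  then have T2: "T2 + 1 \<le> 24 ^ k * (24 * (n + 1))"
    using mult_le_mono2[OF T1, of "24 ^ k"] by (rule order_trans)
  have "T3 + 1 \<le> 8 * (n + 1) * (T2 + 1)"
    using nest_time_bound[of "col_quant n" T2] by (simp add: T3_def col_quant_def)
  then have T3: "T3 + 1 \<le> 8 * (n + 1) * (24 ^ k * (24 * (n + 1)))"
    using mult_le_mono2[OF T2, of "8 * (n + 1)"] by (rule order_trans)
  have "search_time k n + 1 \<le> (8 * (n + 2)) ^ k * 24 ^ k * (T3 + 1)"
    using nest_time_bound[of "basis_quants k n" T3]
    by (simp add: search_time_def cover_time_def T1_def T2_def T3_def basis_quants_def o_def map_const)
  also have "\<dots> \<le> (8 * (n + 2)) ^ k * 24 ^ k * (8 * (n + 1) * (24 ^ k * (24 * (n + 1))))"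
    using T3 by (rule mult_le_mono2)
  also have "\<dots> \<le> (16 * (n + 1)) ^ k * 24 ^ k * (8 * (n + 1) * (24 ^ k * (24 * (n + 1))))"
    by (intro mult_le_mono1 power_mono) simp_all
  also have "\<dots> = 192 * 16 ^ k * 24 ^ k * 24 ^ k * (n + 1) ^ (k + 2)"
    by (simp only: power_mult_distrib power_add power2_eq_square) (simp add: algebra_simps)
  finally show ?thesis
    by simp
qed

theorem theorem1:
  fixes k :: nat
  shows "\<exists>(P :: com) (C :: nat). \<forall>(n :: nat) (M :: bit mat). M \<in> carrier_mat n n \<longrightarrow>
           (\<exists>t s'. big_step P (init_state n M) t s' \<and> t \<le> C * (n + 1) ^ (k + 4) \<and>
                   (accepts s' \<longleftrightarrow> minrank M \<le> k))"
proof (rule exI[of _ "decide_prog k"], rule exI[of _ "193 * 16 ^ k * 24 ^ k * 24 ^ k"], intro allI impI)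
  fix n :: nat and M :: "bit mat"
  assume "M \<in> carrier_mat n n"
  then obtain t s' where run: "big_step (decide_prog k) (init_state n M) t s'" "t \<le> search_time k n + 2"
    "accepts s' \<longleftrightarrow> minrank M \<le> k"
    using decide_prog_correct by blast
  note \<open>t \<le> search_time k n + 2\<close>
  also have "search_time k n + 2 \<le> 193 * 16 ^ k * 24 ^ k * 24 ^ k * (n + 1) ^ (k + 2)"
    by (rule search_time_bound)
  also have "\<dots> \<le> 193 * 16 ^ k * 24 ^ k * 24 ^ k * (n + 1) ^ (k + 4)"
    by (intro mult_le_mono2 power_increasing) simp_all
  finally show "\<exists>t s'. big_step (decide_prog k) (init_state n M) t s' \<and>
      t \<le> 193 * 16 ^ k * 24 ^ k * 24 ^ k * (n + 1) ^ (k + 4) \<and> (accepts s' \<longleftrightarrow> minrank M \<le> k)"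
    using run(1,3) by blast
qed

end
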